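(* For any smooth function $\Theta$ and integer $j\geq 2$, the following estimate holds: \begin{align*} \|\Theta\|_{H^{j}(\Omega_{t})}&\lesssim \|\Theta\|_{H^{j-1}(\Omega_t)}+\|\nabla^{(j-2)}{\overline A}\Theta\|_{L^2(\Omega_t)}+\|[{\overline A},\nabla^{(j-2)}]\Theta\|_{L^2(\Omega_t)}\\ &\quad+\|[\nabla^{\top},\nabla^{(j-2)}]\Theta\|_{H^1(\Omega_t)}+\|\nabla^{\top}\Theta\|_{H^{j-1}(\Omega_t)}, \end{align*} where $\nabla^{\top}=(\nabla^{\top}_1,\nabla^{\top}_2,\nabla^{\top}_3)$ denotes the tangential derivatives $\nabla^{\top}_{i}:=\partial_{i}-{\underline n}_{i}{\underline n}^{j}\partial_{j}$.
   Context: Setting: Minkowski space with coordinates $(x^0,x^1,x^2,x^3)$, fluid slices $\Omega_t\subset\mathbb R^3$ with boundary $\partial\Omega_t$. ${\overline V}=c^{-1}V$ is a future-directed timelike vectorfield and $\overline{\sigma}^2=c^{-2}\sigma^2-c^2$, with $\overline\sigma^2$ constant on $\partial\Omega_t$ and $\nabla\overline\sigma^2\neq0$ there. ${\overline A}:={\overline a}^{ij}\partial^2_{ij}$ with ${\overline a}^{ij}=(m^{-1})^{ij}-\frac{{\overline V}^i}{{\overline V}^0}\frac{{\overline V}^j}{{\overline V}^0}$, an elliptic operator on $\Omega_t$. Here $\nabla_i=\partial_i$ ($i=1,2,3$) are spatial derivatives, $\nabla^{(k)}$ denotes $k$ spatial derivatives, ${\underline n}:=\frac{(\partial_{1}\overline{\sigma}^{2},\partial_{2}\overline{\sigma}^{2},\partial_{3}\overline{\sigma}^{2})}{\sqrt{\sum_{i=1}^{3}(\partial_{i}\overline{\sigma}^{2})^{2}}}$,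 ${\underline n}_i=\delta_{ij}{\underline n}^j$; the operators $\nabla^{\top}_i$ are globally defined, tangential to $\partial\Omega_t$ and span $T\partial\Omega_t$. Implicit constants depend on $\Omega_t$. *)

theory Defs
  imports "HOL-Analysis.Analysis"
begin

definition pd :: "3 \<Rightarrow> (real^3 \<Rightarrow> real) \<Rightarrow> real^3 \<Rightarrow> real" where
  "pd i f = (\<lambda>x. frechet_derivative f (at x) (axis i 1))"

fun dpar :: "3 list \<Rightarrow> (real^3 \<Rightarrow> real) \<Rightarrow> real^3 \<Rightarrow> real" where
  "dpar [] f = f"
| "dpar (i # is) f = pd i (dpar is f)"

definition smooth_fun :: "(real^3 \<Rightarrow> real) \<Rightarrow> bool" where
  "smooth_fun f \<longleftrightarrow> (\<forall>is x. dpar is f differentiable (at x))"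

definition sob_norm :: "nat \<Rightarrow> (real^3) set \<Rightarrow> (real^3 \<Rightarrow> real) \<Rightarrow> real" where
  "sob_norm k \<Omega> f =
     sqrt (\<Sum>m\<le>k. \<Sum>is\<in>{is::3 list. length is = m}. integral \<Omega> (\<lambda>x. (dpar is f x)^2))"

text \<open>H^k norm of a tensor-valued quantity with components F a, a in I.\<close>
definition fam_norm :: "nat \<Rightarrow> (real^3) set \<Rightarrow> ('a \<Rightarrow> real^3 \<Rightarrow> real) \<Rightarrow> 'a set \<Rightarrow> real" where
  "fam_norm k \<Omega> F I = sqrt (\<Sum>a\<in>I. (sob_norm k \<Omega> (F a))^2)"

text \<open>Coefficients abar^{ij} = (m^{-1})^{ij} - Vbar^i Vbar^j / (Vbar^0)^2, m = diag(-1,1,1,1);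
  V0 is the time component of Vbar and Vs its spatial part.\<close>
definition abar :: "(real^3 \<Rightarrow> real) \<Rightarrow> (real^3 \<Rightarrow> real^3) \<Rightarrow> 3 \<Rightarrow> 3 \<Rightarrow> real^3 \<Rightarrow> real" where
  "abar V0 Vs i j x = (if i = j then 1 else 0) - (Vs x $ i / V0 x) * (Vs x $ j / V0 x)"

definition Aop :: "(real^3 \<Rightarrow> real) \<Rightarrow> (real^3 \<Rightarrow> real^3) \<Rightarrow> (real^3 \<Rightarrow> real) \<Rightarrow> real^3 \<Rightarrow> real" where
  "Aop V0 Vs f x = (\<Sum>i\<in>UNIV. \<Sum>j\<in>UNIV. abar V0 Vs i j x * dpar [i, j] f x)"

definition grad :: "(real^3 \<Rightarrow> real) \<Rightarrow> real^3 \<Rightarrow> real^3" where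
  "grad f x = (\<chi> i. pd i f x)"

definition nunder :: "(real^3 \<Rightarrow> real) \<Rightarrow> real^3 \<Rightarrow> real^3" where
  "nunder s x = (1 / norm (grad s x)) *\<^sub>R grad s x"

definition tan_d :: "(real^3 \<Rightarrow> real^3) \<Rightarrow> 3 \<Rightarrow> (real^3 \<Rightarrow> real) \<Rightarrow> real^3 \<Rightarrow> real" where
  "tan_d n i f x = pd i f x - n x $ i * (\<Sum>j\<in>UNIV. n x $ j * pd j f x)"

end

theory Submission
  imports Defs
begin

text \<open>At each point the Hessian H of Theta is symmetric. Its part H - (H n) n^T differs from the
  derivatives of the tangential derivatives only by a first-order term involving the derivatives
  of the field n, and the remaining component n^T H n is recovered from
  A Theta = trace ((I - w w^T) H), w = V / V^0, because I - w w^T is uniformly elliptic on the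
  compact set closure Omega_t. Integrating this pointwise bound over Omega_t and applying it to
  the derivatives of order j - 2 of Theta bounds the top-order part of the H^j norm; commuting
  these derivatives with the tangential derivatives and with A produces the commutator terms,
  and the first-order terms are bounded by the H^(j-1) norm.\<close>

section \<open>Partial derivatives and smooth functions\<close>

lemma pd_eq: "(f has_derivative f') (at x) \<Longrightarrow> pd i f x = f' (axis i 1)"
  by (metis frechet_derivative_at pd_def)

lemma dpar_append: "dpar (xs @ ys) f = dpar xs (dpar ys f)"
  by (induction xs) auto

lemma pd_const: "pd i (\<lambda>y. c) x = 0"
  using pd_eq[OF has_derivative_const] by simp

lemma pd_sum:
  assumes "finite I" "\<And>k. k \<in> I \<Longrightarrow> F k differentiable (at x)"
  shows "pd i (\<lambda>y. \<Sum>k\<in>I. F k y) x = (\<Sum>k\<in>I. pd i (F k) x)"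
proof -
  have "\<And>k. k \<in> I \<Longrightarrow> (F k has_derivative frechet_derivative (F k) (at x)) (at x)"
    using assms(2) frechet_derivative_works by blast
  then show ?thesis
    using pd_eq[OF has_derivative_sum[of I F "\<lambda>k. frechet_derivative (F k) (at x)"]]
    by (simp add: pd_def)
qed

lemma pd_add:
  assumes "f differentiable (at x)" "g differentiable (at x)"
  shows "pd i (\<lambda>y. f y + g y) x = pd i f x + pd i g x"
proof -
  obtain f' g' where f': "(f has_derivative f') (at x)" and g': "(g has_derivative g') (at x)"
    using assms unfolding differentiable_def by blast
  show ?thesis using pd_eq[OF has_derivative_add[OF f' g']] pd_eq[OF f'] pd_eq[OF g'] by simp
qed

lemma pd_diff:
  assumes "f differentiable (at x)" "g differentiable (at x)"
  shows "pd i (\<lambda>y. f y - g y) x = pd i f x - pd i g x"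
proof -
  obtain f' g' where f': "(f has_derivative f') (at x)" and g': "(g has_derivative g') (at x)"
    using assms unfolding differentiable_def by blast
  show ?thesis using pd_eq[OF has_derivative_diff[OF f' g']] pd_eq[OF f'] pd_eq[OF g'] by simp
qed

lemma pd_mult:
  assumes "f differentiable (at x)" "g differentiable (at x)"
  shows "pd i (\<lambda>y. f y * g y) x = pd i f x * g x + f x * pd i g x"
proof -
  obtain f' g' where f': "(f has_derivative f') (at x)" and g': "(g has_derivative g') (at x)"
    using assms unfolding differentiable_def by blast
  show ?thesis using pd_eq[OF has_derivative_mult[OF f' g']] pd_eq[OF f'] pd_eq[OF g'] by simp
qed

lemma pd_inverse:
  assumes "f differentiable (at x)" "f x \<noteq> 0"
  shows "pd i (\<lambda>y. inverse (f y)) x = - (inverse (f x) * pd i f x * inverse (f x))"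
proof -
  obtain f' where f': "(f has_derivative f') (at x)"
    using assms unfolding differentiable_def by blast
  show ?thesis using pd_eq[OF Deriv.has_derivative_inverse[OF assms(2) f']] pd_eq[OF f'] by simp
qed

lemma pd_transform_within_open:
  assumes "open U" "x \<in> U" "\<And>y. y \<in> U \<Longrightarrow> f y = g y" "f differentiable (at x)"
  shows "pd i f x = pd i g x"
  unfolding pd_def using frechet_derivative_transform_within_open[OF assms(4,1,2)] assms(3) by metis

lemma differentiable_transform_within_open:
  assumes "open U" "x \<in> U" "\<And>y. y \<in> U \<Longrightarrow> f y = g y" "f differentiable (at x)"
  shows "g differentiable (at x)"
  using assms unfolding differentiable_def by (meson has_derivative_transform_within_open)

lemma has_real_derivative_pd_along_axis:
  assumes "g differentiable (at (y + s *\<^sub>R axis p 1))"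
  shows "((\<lambda>s. g (y + s *\<^sub>R axis p 1)) has_real_derivative pd p g (y + s *\<^sub>R axis p 1)) (at s)"
proof -
  let ?v = "axis p 1 :: real^3"
  obtain g' where g': "(g has_derivative g') (at (y + s *\<^sub>R ?v))"
    using assms unfolding differentiable_def by blast
  have "((\<lambda>s. y + s *\<^sub>R ?v) has_derivative (\<lambda>h. h *\<^sub>R ?v)) (at s)"
    by (auto intro!: derivative_eq_intros)
  from has_derivative_compose[OF this g']
  have "((\<lambda>s. g (y + s *\<^sub>R ?v)) has_derivative (\<lambda>h. g' (h *\<^sub>R ?v))) (at s)"
    by (simp add: o_def)
  moreover have "(\<lambda>h. g' (h *\<^sub>R ?v)) = (\<lambda>h. pd p g (y + s *\<^sub>R ?v) * h)"
    using pd_eq[OF g'] has_derivative_linear[OF g'] by (auto simp: linear_cmul mult.commute)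
  ultimately show ?thesis unfolding has_field_derivative_def by simp
qed

definition smooth_on :: "(real^3) set \<Rightarrow> (real^3 \<Rightarrow> real) \<Rightarrow> bool" where
  "smooth_on U f \<longleftrightarrow> (\<forall>is. \<forall>x\<in>U. dpar is f differentiable (at x))"

lemma smooth_on_coinduct:
  assumes step: "\<And>f. P f \<Longrightarrow> (\<forall>x\<in>U. f differentiable (at x)) \<and> (\<forall>i. P (pd i f))"
    and "P f"
  shows "smooth_on U f"
proof -
  have "\<forall>f. P f \<longrightarrow> (\<forall>x\<in>U. dpar is f differentiable (at x))" for "is"
  proof (induction "is" rule: rev_induct)
    case Nil
    then show ?case using step by auto
  next
    case (snoc i "is")
    then show ?case using step by (auto simp: dpar_append)
  qed
  then show ?thesis using assms(2) by (auto simp: smooth_on_def)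
qed

lemma smooth_fun_imp_smooth_on: "smooth_fun f \<Longrightarrow> smooth_on U f"
  by (auto simp: smooth_fun_def smooth_on_def)

lemma smooth_on_differentiable: "smooth_on U f \<Longrightarrow> x \<in> U \<Longrightarrow> f differentiable (at x)"
  unfolding smooth_on_def by (metis dpar.simps(1))

lemma smooth_on_continuous_on: "smooth_on U f \<Longrightarrow> continuous_on U f"
  by (meson continuous_at_imp_continuous_on differentiable_imp_continuous_within smooth_on_differentiable)

lemma continuous_on_smooth_components:
  fixes v :: "real^3 \<Rightarrow> real^'n"
  assumes "\<And>i. smooth_on U (\<lambda>x. v x $ i)"
  shows "continuous_on U v"
  using continuous_on_vec_lambda[of U "\<lambda>i x. v x $ i"] assms smooth_on_continuous_on by simp

lemma smooth_on_dpar: "smooth_on U f \<Longrightarrow> smooth_on U (dpar is f)"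
  unfolding smooth_on_def by (metis dpar_append)

lemma smooth_on_pd: "smooth_on U f \<Longrightarrow> smooth_on U (pd i f)"
  using smooth_on_dpar[of U f "[i]"] by simp

lemma smooth_on_const: "smooth_on U (\<lambda>x. c)"
  by (rule smooth_on_coinduct[where P="\<lambda>f. \<exists>c. f = (\<lambda>x. c)"]) (auto simp: pd_const[abs_def])

text \<open>Smooth functions on an open set together with inverses of non-vanishing ones generate
  an algebra that is closed under partial derivatives, up to equality on the set; by
  coinduction all its members are smooth.\<close>

inductive_set smooth_algebra :: "(real^3) set \<Rightarrow> (real^3 \<Rightarrow> real) set" for U where
  smooth: "smooth_on U f \<Longrightarrow> f \<in> smooth_algebra U"
| add: "f \<in> smooth_algebra U \<Longrightarrow> g \<in> smooth_algebra U \<Longrightarrow> (\<lambda>x. f x + g x) \<in> smooth_algebra U"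
| mult: "f \<in> smooth_algebra U \<Longrightarrow> g \<in> smooth_algebra U \<Longrightarrow> (\<lambda>x. f x * g x) \<in> smooth_algebra U"
| inverse: "smooth_on U g \<Longrightarrow> \<forall>x\<in>U. g x \<noteq> 0 \<Longrightarrow> (\<lambda>x. inverse (g x)) \<in> smooth_algebra U"

lemma smooth_algebra_pd:
  assumes "open U" and "h \<in> smooth_algebra U"
  shows "(\<forall>x\<in>U. h differentiable (at x)) \<and> (\<forall>i. \<exists>g\<in>smooth_algebra U. \<forall>x\<in>U. pd i h x = g x)"
  using assms(2)
proof (induction rule: smooth_algebra.induct)
  case (smooth f)
  then show ?case using smooth_on_differentiable smooth_on_pd smooth_algebra.smooth by blast
next
  case (add f g)
  show ?case
  proof (intro conjI allI)
    show "\<forall>x\<in>U. (\<lambda>x. f x + g x) differentiable at x" using add by auto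
    fix i
    obtain f' g' where "f' \<in> smooth_algebra U" "g' \<in> smooth_algebra U"
      "\<forall>x\<in>U. pd i f x = f' x" "\<forall>x\<in>U. pd i g x = g' x"
      using add by meson
    then show "\<exists>h\<in>smooth_algebra U. \<forall>x\<in>U. pd i (\<lambda>x. f x + g x) x = h x"
      using add by (intro bexI[of _ "\<lambda>x. f' x + g' x"]) (auto simp: pd_add intro: smooth_algebra.add)
  qed
next
  case (mult f g)
  show ?case
  proof (intro conjI allI)
    show "\<forall>x\<in>U. (\<lambda>x. f x * g x) differentiable at x" using mult by auto
    fix i
    obtain f' g' where "f' \<in> smooth_algebra U" "g' \<in> smooth_algebra U"
      "\<forall>x\<in>U. pd i f x = f' x" "\<forall>x\<in>U. pd i g x = g' x"
      using mult by meson
    then show "\<exists>h\<in>smooth_algebra U. \<forall>x\<in>U. pd i (\<lambda>x. f x * g x) x = h x"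
      using mult by (intro bexI[of _ "\<lambda>x. f' x * g x + f x * g' x"])
        (auto simp: pd_mult intro: smooth_algebra.add smooth_algebra.mult)
  qed
next
  case (inverse g)
  show ?case
  proof (intro conjI allI)
    show "\<forall>x\<in>U. (\<lambda>x. inverse (g x)) differentiable at x"
      using inverse smooth_on_differentiable by (auto intro!: derivative_intros)
    fix i
    have "(\<lambda>x. - 1 * (inverse (g x) * pd i g x * inverse (g x))) \<in> smooth_algebra U"
      using inverse by (intro smooth_algebra.intros smooth_on_const smooth_on_pd)
    then show "\<exists>h\<in>smooth_algebra U. \<forall>x\<in>U. pd i (\<lambda>x. inverse (g x)) x = h x"
      using inverse smooth_on_differentiable by (intro bexI) (auto simp: pd_inverse)
  qed
qed

lemma smooth_algebra_smooth_on:
  assumes U: "open U" and h: "h \<in> smooth_algebra U"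
  shows "smooth_on U h"
proof (rule smooth_on_coinduct[where P="\<lambda>h. \<exists>g\<in>smooth_algebra U. \<forall>x\<in>U. h x = g x"])
  fix f assume "\<exists>g\<in>smooth_algebra U. \<forall>x\<in>U. f x = g x"
  then obtain g where g: "g \<in> smooth_algebra U" "\<forall>x\<in>U. f x = g x" by blast
  note g_pd = smooth_algebra_pd[OF U g(1)]
  show "(\<forall>x\<in>U. f differentiable at x) \<and> (\<forall>i. \<exists>g\<in>smooth_algebra U. \<forall>x\<in>U. pd i f x = g x)"
  proof (intro conjI allI ballI)
    fix x assume "x \<in> U"
    then show "f differentiable at x"
      using differentiable_transform_within_open[OF U, of x g f] g g_pd by auto
  next
    fix i
    obtain g' where g': "g' \<in> smooth_algebra U" "\<forall>x\<in>U. pd i g x = g' x" using g_pd by blast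
    have "\<forall>x\<in>U. pd i f x = g' x"
      using pd_transform_within_open[OF U, of _ g f] g g' g_pd by auto
    with g'(1) show "\<exists>g\<in>smooth_algebra U. \<forall>x\<in>U. pd i f x = g x" by blast
  qed
qed (use h in auto)

lemma smooth_on_add:
  "open U \<Longrightarrow> smooth_on U f \<Longrightarrow> smooth_on U g \<Longrightarrow> smooth_on U (\<lambda>x. f x + g x)"
  by (metis smooth_algebra.add smooth_algebra.smooth smooth_algebra_smooth_on)

lemma smooth_on_mult:
  "open U \<Longrightarrow> smooth_on U f \<Longrightarrow> smooth_on U g \<Longrightarrow> smooth_on U (\<lambda>x. f x * g x)"
  by (metis smooth_algebra.mult smooth_algebra.smooth smooth_algebra_smooth_on)

lemma smooth_on_inverse:
  "open U \<Longrightarrow> smooth_on U g \<Longrightarrow> \<forall>x\<in>U. g x \<noteq> 0 \<Longrightarrow> smooth_on U (\<lambda>x. inverse (g x))"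
  by (metis smooth_algebra.inverse smooth_algebra_smooth_on)

lemma smooth_on_diff:
  assumes "open U" "smooth_on U f" "smooth_on U g"
  shows "smooth_on U (\<lambda>x. f x - g x)"
  using smooth_on_add[OF assms(1,2) smooth_on_mult[OF assms(1) smooth_on_const assms(3)], of "- 1"]
  by simp

lemma smooth_on_sum:
  assumes "open U" "finite I" "\<And>k. k \<in> I \<Longrightarrow> smooth_on U (F k)"
  shows "smooth_on U (\<lambda>x. \<Sum>k\<in>I. F k x)"
  using assms(2,3)
proof (induction I rule: finite_induct)
  case empty
  then show ?case using smooth_on_const[of U 0] by simp
next
  case (insert k I)
  then show ?case using smooth_on_add[OF assms(1), of "F k" "\<lambda>x. \<Sum>k\<in>I. F k x"] by simp
qed

lemma smooth_on_tan_d: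
  assumes "open U" "\<And>l. smooth_on U (\<lambda>x. nv x $ l)" "smooth_on U f"
  shows "smooth_on U (tan_d nv i f)"
proof -
  have "smooth_on U (\<lambda>y. pd i f y - nv y $ i * (\<Sum>l\<in>UNIV. nv y $ l * pd l f y))"
    using assms by (intro smooth_on_diff smooth_on_mult smooth_on_sum smooth_on_pd) auto
  then show ?thesis by (simp add: tan_d_def[abs_def])
qed

lemma smooth_on_Aop:
  assumes "open U" "smooth_on U V0" "\<forall>x\<in>U. V0 x \<noteq> 0" "\<And>l. smooth_on U (\<lambda>x. Vs x $ l)"
    and "smooth_on U f"
  shows "smooth_on U (Aop V0 Vs f)"
proof -
  have "smooth_on U (\<lambda>x. \<Sum>i\<in>UNIV. \<Sum>j\<in>UNIV. ((\<lambda>x. if i = j then 1 else 0) x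
          - (Vs x $ i * inverse (V0 x)) * (Vs x $ j * inverse (V0 x))) * dpar [i, j] f x)"
    using assms by (intro smooth_on_sum smooth_on_mult smooth_on_diff smooth_on_const
        smooth_on_inverse smooth_on_dpar) auto
  then show ?thesis by (simp add: Aop_def[abs_def] abar_def divide_inverse)
qed

section \<open>Symmetry of second derivatives\<close>

lemma second_difference_mvt:
  assumes U: "open U" and f: "smooth_on U f" and h: "h > 0" and sub: "cball x (2*h) \<subseteq> U"
  shows "\<exists>s t. 0 < s \<and> s < h \<and> 0 < t \<and> t < h \<and>
     f (x + h *\<^sub>R axis q 1 + h *\<^sub>R axis p 1) - f (x + h *\<^sub>R axis p 1) - f (x + h *\<^sub>R axis q 1) + f x
       = h * h * pd q (pd p f) (x + s *\<^sub>R axis p 1 + t *\<^sub>R axis q 1)"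
proof -
  let ?ep = "axis p 1 :: real^3" and ?eq = "axis q 1 :: real^3"
  have in_U: "x + s *\<^sub>R ?ep + t *\<^sub>R ?eq \<in> U" if "0 \<le> s" "s \<le> h" "0 \<le> t" "t \<le> h" for s t
  proof -
    have "norm (s *\<^sub>R ?ep + t *\<^sub>R ?eq) \<le> norm (s *\<^sub>R ?ep) + norm (t *\<^sub>R ?eq)"
      by (rule norm_triangle_ineq)
    also have "\<dots> \<le> 2*h" using that by simp
    finally have "dist x (x + (s *\<^sub>R ?ep + t *\<^sub>R ?eq)) \<le> 2*h"
      by (metis add_diff_cancel_left' dist_commute dist_norm)
    then show ?thesis using sub by (auto simp: add.assoc)
  qed
  define \<phi> where "\<phi> s = f (x + h *\<^sub>R ?eq + s *\<^sub>R ?ep) - f (x + s *\<^sub>R ?ep)" for s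
  have "(\<phi> has_real_derivative (pd p f (x + h *\<^sub>R ?eq + s *\<^sub>R ?ep) - pd p f (x + s *\<^sub>R ?ep))) (at s)"
    if "0 \<le> s" "s \<le> h" for s
  proof -
    have "x + h *\<^sub>R ?eq + s *\<^sub>R ?ep \<in> U" using in_U[of s h] that h by (simp add: algebra_simps)
    moreover have "x + s *\<^sub>R ?ep \<in> U" using in_U[of s 0] that h by simp
    ultimately show ?thesis unfolding \<phi>_def
      by (intro DERIV_diff has_real_derivative_pd_along_axis smooth_on_differentiable[OF f])
  qed
  then obtain s where s: "0 < s" "s < h"
    and s_eq: "\<phi> h - \<phi> 0 = h * (pd p f (x + h *\<^sub>R ?eq + s *\<^sub>R ?ep) - pd p f (x + s *\<^sub>R ?ep))"
    using MVT2[OF h, of \<phi> "\<lambda>s. pd p f (x + h *\<^sub>R ?eq + s *\<^sub>R ?ep) - pd p f (x + s *\<^sub>R ?ep)"]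
    by auto
  define \<psi> where "\<psi> t = pd p f (x + s *\<^sub>R ?ep + t *\<^sub>R ?eq)" for t
  have "(\<psi> has_real_derivative pd q (pd p f) (x + s *\<^sub>R ?ep + t *\<^sub>R ?eq)) (at t)"
    if "0 \<le> t" "t \<le> h" for t
    unfolding \<psi>_def
    by (intro has_real_derivative_pd_along_axis smooth_on_differentiable[OF smooth_on_pd[OF f]] in_U)
      (use that s in auto)
  then obtain t where t: "0 < t" "t < h"
    and t_eq: "\<psi> h - \<psi> 0 = h * pd q (pd p f) (x + s *\<^sub>R ?ep + t *\<^sub>R ?eq)"
    using MVT2[OF h, of \<psi> "\<lambda>t. pd q (pd p f) (x + s *\<^sub>R ?ep + t *\<^sub>R ?eq)"] by auto
  have "\<psi> h - \<psi> 0 = pd p f (x + h *\<^sub>R ?eq + s *\<^sub>R ?ep) - pd p f (x + s *\<^sub>R ?ep)"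
    unfolding \<psi>_def by (simp add: algebra_simps)
  then have "\<phi> h - \<phi> 0 = h * h * pd q (pd p f) (x + s *\<^sub>R ?ep + t *\<^sub>R ?eq)"
    using s_eq t_eq by simp
  moreover have "\<phi> h - \<phi> 0
      = f (x + h *\<^sub>R ?eq + h *\<^sub>R ?ep) - f (x + h *\<^sub>R ?ep) - f (x + h *\<^sub>R ?eq) + f x"
    unfolding \<phi>_def by simp
  ultimately show ?thesis using s t by metis
qed

text \<open>Schwarz's theorem: both mixed second derivatives are limits of the same second difference
  quotient, by the mean value theorem applied in either order.\<close>

lemma pd_commute:
  assumes U: "open U" and f: "smooth_on U f" and x: "x \<in> U"
  shows "pd p (pd q f) x = pd q (pd p f) x"
proof (rule ccontr)
  let ?F1 = "pd q (pd p f)" and ?F2 = "pd p (pd q f)"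
  assume ne: "?F2 x \<noteq> ?F1 x"
  define \<epsilon> where "\<epsilon> = \<bar>?F1 x - ?F2 x\<bar> / 2"
  have \<epsilon>: "\<epsilon> > 0" using ne by (simp add: \<epsilon>_def)
  have "isCont ?F1 x" "isCont ?F2 x"
    using smooth_on_differentiable[OF smooth_on_pd[OF smooth_on_pd[OF f]] x]
    by (simp_all add: differentiable_imp_continuous_within)
  then obtain d1 d2 where d1: "d1 > 0" "\<And>y. dist y x < d1 \<Longrightarrow> \<bar>?F1 y - ?F1 x\<bar> < \<epsilon>"
    and d2: "d2 > 0" "\<And>y. dist y x < d2 \<Longrightarrow> \<bar>?F2 y - ?F2 x\<bar> < \<epsilon>"
    using \<epsilon> unfolding continuous_at_eps_delta dist_real_def by (metis dist_commute)
  obtain d3 where d3: "d3 > 0" "ball x d3 \<subseteq> U" using U x open_contains_ball by blast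
  define h where "h = min d1 (min d2 d3) / 3"
  have h: "h > 0" using d1 d2 d3 by (simp add: h_def)
  have sub: "cball x (2*h) \<subseteq> U" using d3 h by (auto simp: h_def)
  have near: "dist (x + s *\<^sub>R axis i 1 + t *\<^sub>R axis k 1) x < min d1 (min d2 d3)"
    if "0 < s" "s < h" "0 < t" "t < h" for s t i k
  proof -
    have "norm (s *\<^sub>R axis i 1 + t *\<^sub>R axis k 1 :: real^3)
        \<le> norm (s *\<^sub>R axis i 1 :: real^3) + norm (t *\<^sub>R axis k 1 :: real^3)"
      by (rule norm_triangle_ineq)
    also have "\<dots> < 3 * h" using that by simp
    finally show ?thesis by (simp add: dist_norm add.assoc h_def)
  qed
  obtain s t where st: "0 < s" "s < h" "0 < t" "t < h" and e1:
     "f (x + h *\<^sub>R axis q 1 + h *\<^sub>R axis p 1) - f (x + h *\<^sub>R axis p 1) - f (x + h *\<^sub>R axis q 1) + f x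
       = h * h * ?F1 (x + s *\<^sub>R axis p 1 + t *\<^sub>R axis q 1)"
    using second_difference_mvt[OF U f h sub, of q p] by blast
  obtain s' t' where st': "0 < s'" "s' < h" "0 < t'" "t' < h" and e2:
     "f (x + h *\<^sub>R axis p 1 + h *\<^sub>R axis q 1) - f (x + h *\<^sub>R axis q 1) - f (x + h *\<^sub>R axis p 1) + f x
       = h * h * ?F2 (x + s' *\<^sub>R axis q 1 + t' *\<^sub>R axis p 1)"
    using second_difference_mvt[OF U f h sub, of p q] by blast
  have "?F1 (x + s *\<^sub>R axis p 1 + t *\<^sub>R axis q 1) = ?F2 (x + s' *\<^sub>R axis q 1 + t' *\<^sub>R axis p 1)"
    using e1 e2 h by (simp add: algebra_simps)
  moreover have "\<bar>?F1 (x + s *\<^sub>R axis p 1 + t *\<^sub>R axis q 1) - ?F1 x\<bar> < \<epsilon>"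
    using d1(2) near[OF st] by auto
  moreover have "\<bar>?F2 (x + s' *\<^sub>R axis q 1 + t' *\<^sub>R axis p 1) - ?F2 x\<bar> < \<epsilon>"
    using d2(2) near[OF st'] by auto
  ultimately have "\<bar>?F1 x - ?F2 x\<bar> < 2 * \<epsilon>" by linarith
  then show False by (simp add: \<epsilon>_def)
qed

section \<open>A matrix inequality\<close>

definition outer_prod :: "real^'n \<Rightarrow> real^'n \<Rightarrow> real^'n^'n" where
  "outer_prod a b = (\<chi> p q. a$p * b$q)"

lemma outer_prod_mult_vec: "outer_prod a b *v x = (b \<bullet> x) *\<^sub>R a"
  by (simp add: vec_eq_iff outer_prod_def matrix_vector_mult_def inner_vec_def sum_distrib_left mult_ac)

lemma transpose_outer_prod: "transpose (outer_prod a b) = outer_prod b a"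
  by (simp add: vec_eq_iff outer_prod_def transpose_def)

lemma trace_outer_prod: "trace (outer_prod a b) = a \<bullet> b"
  by (simp add: trace_def outer_prod_def inner_vec_def)

lemma transpose_diff: "transpose (A - B) = transpose A - transpose B"
  by (simp add: vec_eq_iff transpose_def)

lemma norm_sq_vec: "(norm (x :: real^'n))^2 = (\<Sum>i\<in>UNIV. (x$i)^2)"
  unfolding power2_norm_eq_inner by (simp add: inner_vec_def power2_eq_square)

lemma norm_sq_matrix: "(norm (M :: real^'n^'m))^2 = (\<Sum>p\<in>UNIV. \<Sum>q\<in>UNIV. (M$p$q)^2)"
  unfolding power2_norm_eq_inner by (simp add: inner_vec_def power2_eq_square)

lemma norm_outer_prod: "norm (outer_prod a b) = norm a * norm b"
proof -
  have "(norm (outer_prod a b))^2 = (\<Sum>p\<in>UNIV. (a$p)^2) * (\<Sum>q\<in>UNIV. (b$q)^2)"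
    by (simp add: norm_sq_matrix outer_prod_def power_mult_distrib sum_product)
  also have "\<dots> = (norm a * norm b)^2" by (simp add: norm_sq_vec power_mult_distrib)
  finally show ?thesis by (metis norm_ge_zero power2_eq_iff_nonneg zero_le_mult_iff)
qed

lemma norm_transpose: "norm (transpose (M :: real^'n^'n)) = norm M"
proof -
  have "(norm (transpose M))^2 = (\<Sum>p\<in>UNIV. \<Sum>q\<in>UNIV. (M$q$p)^2)"
    unfolding norm_sq_matrix by (simp add: transpose_def)
  also have "\<dots> = (norm M)^2" unfolding norm_sq_matrix by (rule sum.swap)
  finally have "(norm (transpose M))^2 = (norm M)^2" .
  then show ?thesis by (metis norm_ge_zero power2_eq_iff_nonneg)
qed

lemma norm_matrix_vector_mult_le: "norm ((M :: real^'n^'m) *v x) \<le> norm M * norm x"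
proof -
  have "(norm (M *v x))^2 = (\<Sum>p\<in>UNIV. (M$p \<bullet> x)^2)"
    by (simp add: norm_sq_vec matrix_vector_mult_def inner_vec_def)
  also have "\<dots> \<le> (\<Sum>p\<in>UNIV. (norm (M$p))^2 * (norm x)^2)"
  proof (rule sum_mono)
    fix p
    have "\<bar>M$p \<bullet> x\<bar> \<le> norm (M$p) * norm x" by (rule Cauchy_Schwarz_ineq2)
    then show "(M$p \<bullet> x)^2 \<le> (norm (M$p))^2 * (norm x)^2"
      by (metis abs_ge_zero power2_abs power_mono power_mult_distrib)
  qed
  also have "\<dots> = (norm M * norm x)^2"
    by (simp add: sum_distrib_right[symmetric] norm_sq_vec norm_sq_matrix power_mult_distrib)
  finally show ?thesis by (rule power2_le_imp_le) simp
qed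

lemma abs_trace_le: "\<bar>trace (M :: real^'n^'n)\<bar> \<le> CARD('n) * norm M"
proof -
  have "\<bar>trace M\<bar> \<le> (\<Sum>i\<in>UNIV. \<bar>M$i$i\<bar>)" unfolding trace_def by (rule sum_abs)
  also have "\<dots> \<le> (\<Sum>i\<in>(UNIV::'n set). norm M)"
  proof (rule sum_mono)
    fix i :: 'n
    have "\<bar>M$i$i\<bar> \<le> norm (M$i)" using component_le_norm_cart[of "M$i" i] by simp
    also have "norm (M$i) \<le> norm M" by (rule Finite_Cartesian_Product.norm_nth_le)
    finally show "\<bar>M$i$i\<bar> \<le> norm M" .
  qed
  finally show ?thesis by simp
qed

lemma norm_skew_part_mult_le: "norm ((M - transpose M) *v n) \<le> 2 * norm M * norm (n :: real^'n)"
proof -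
  have "norm ((M - transpose M) *v n) \<le> norm (M - transpose M) * norm n"
    by (rule norm_matrix_vector_mult_le)
  also have "norm (M - transpose M) \<le> 2 * norm M"
    using norm_triangle_ineq4[of M "transpose M"] norm_transpose[of M] by simp
  finally show ?thesis by (simp add: mult_right_mono)
qed

lemma abs_elliptic_contraction_le:
  fixes M :: "real^'n^'n"
  assumes "norm w \<le> 1"
  shows "\<bar>trace M - w \<bullet> (M *v w)\<bar> \<le> (CARD('n) + 1) * norm M"
proof -
  have "\<bar>w \<bullet> (M *v w)\<bar> \<le> norm w * (norm M * norm w)"
    using Cauchy_Schwarz_ineq2[of w "M *v w"] norm_matrix_vector_mult_le[of M w]
    by (meson mult_left_mono norm_ge_zero order_trans)
  also have "\<dots> = norm M * (norm w * norm w)" by (simp add: mult_ac)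
  also have "\<dots> \<le> norm M" using assms by (simp add: mult_le_one mult_left_le)
  finally show ?thesis using abs_trace_le[of M] by (simp add: algebra_simps)
qed

lemma elliptic_contraction_add_outer_prod:
  "trace (M + outer_prod g n) - w \<bullet> ((M + outer_prod g n) *v w)
     = trace M - w \<bullet> (M *v w) + n \<bullet> g - (w \<bullet> g) * (n \<bullet> w)"
  by (simp add: trace_add trace_outer_prod matrix_vector_mult_add_rdistrib outer_prod_mult_vec
      inner_add_right inner_commute)

lemma symmetric_skew_part_identity:
  assumes "transpose G = G" and g: "g = G *v n"
  shows "(n \<bullet> n) *\<^sub>R g = (n \<bullet> g) *\<^sub>R n - ((G - outer_prod g n) - transpose (G - outer_prod g n)) *v n"
proof -
  have Mn: "(G - outer_prod g n) *v n = g - (n \<bullet> n) *\<^sub>R g"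
    unfolding matrix_vector_mult_diff_rdistrib outer_prod_mult_vec using g by simp
  have T: "transpose (G - outer_prod g n) = G - outer_prod n g"
    by (simp add: assms(1) transpose_diff transpose_outer_prod)
  have Mtn: "transpose (G - outer_prod g n) *v n = g - (n \<bullet> g) *\<^sub>R n"
    unfolding T matrix_vector_mult_diff_rdistrib outer_prod_mult_vec using g by (simp add: inner_commute)
  show ?thesis
    unfolding matrix_vector_mult_diff_rdistrib[of "G - outer_prod g n" "transpose (G - outer_prod g n)"] Mn Mtn
    by (simp add: algebra_simps)
qed

text \<open>This is where ellipticity enters: if N g = beta n - z with N = n . n, the contraction
  beta - (w . g)(w . n) of the matrix g n^T with I - w w^T determines beta, because
  (w . n)^2 <= (1 - c) N.\<close>

lemma elliptic_normal_component_le: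
  fixes g n w z :: "real^'n"
  assumes Ng: "(n \<bullet> n) *\<^sub>R g = \<beta> *\<^sub>R n - z" and c: "0 < c" and w: "(norm w)^2 \<le> 1 - c"
    and "n \<noteq> 0"
  shows "c * \<bar>\<beta>\<bar> \<le> \<bar>\<beta> - (w \<bullet> g) * (w \<bullet> n)\<bar> + norm z / norm n"
proof -
  define N where "N = n \<bullet> n"
  have N: "N = (norm n)^2" "N > 0" using \<open>n \<noteq> 0\<close> by (simp_all add: N_def power2_norm_eq_inner)
  have nw: "norm w \<le> 1" by (rule power2_le_imp_le) (use w c in auto)
  have ident: "N * (\<beta> - (w \<bullet> g) * (w \<bullet> n)) = \<beta> * (N - (w \<bullet> n)^2) + (w \<bullet> z) * (w \<bullet> n)"
  proof -
    have wg: "N * (w \<bullet> g) = \<beta> * (w \<bullet> n) - w \<bullet> z"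
      using arg_cong[OF Ng, of "\<lambda>v. w \<bullet> v"] by (simp add: N_def inner_diff_right)
    have "N * (\<beta> - (w \<bullet> g) * (w \<bullet> n)) = N * \<beta> - (N * (w \<bullet> g)) * (w \<bullet> n)"
      by (simp add: algebra_simps)
    also have "\<dots> = N * \<beta> - (\<beta> * (w \<bullet> n) - w \<bullet> z) * (w \<bullet> n)" by (simp only: wg)
    also have "\<dots> = \<beta> * (N - (w \<bullet> n)^2) + (w \<bullet> z) * (w \<bullet> n)"
      by (simp add: power2_eq_square algebra_simps)
    finally show ?thesis .
  qed
  have "\<bar>w \<bullet> v\<bar> \<le> norm v" for v
    using Cauchy_Schwarz_ineq2[of w v] mult_right_mono[OF nw norm_ge_zero[of v]] by linarith
  then have wz: "\<bar>(w \<bullet> z) * (w \<bullet> n)\<bar> \<le> norm z * norm n"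
    unfolding abs_mult by (intro mult_mono) auto
  have ell: "c * N \<le> N - (w \<bullet> n)^2"
  proof -
    have "(w \<bullet> n)^2 \<le> (w \<bullet> w) * N" unfolding N_def by (rule Cauchy_Schwarz_ineq)
    also have "\<dots> \<le> (1 - c) * N" using w N by (simp add: power2_norm_eq_inner[symmetric])
    finally show ?thesis by (simp add: algebra_simps)
  qed
  have "(c * \<bar>\<beta>\<bar>) * N \<le> \<bar>\<beta>\<bar> * (N - (w \<bullet> n)^2)"
    using mult_left_mono[OF ell, of "\<bar>\<beta>\<bar>"] by (simp add: mult_ac)
  also have "\<dots> = \<bar>N * (\<beta> - (w \<bullet> g) * (w \<bullet> n)) - (w \<bullet> z) * (w \<bullet> n)\<bar>"
  proof -
    have "0 \<le> N - (w \<bullet> n)^2" using ell c N by (meson less_eq_real_def mult_pos_pos order_trans)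
    then show ?thesis using ident by (simp add: abs_mult)
  qed
  also have "\<dots> \<le> N * \<bar>\<beta> - (w \<bullet> g) * (w \<bullet> n)\<bar> + norm z * norm n"
    using abs_triangle_ineq4[of "N * (\<beta> - (w \<bullet> g) * (w \<bullet> n))" "(w \<bullet> z) * (w \<bullet> n)"] wz N
    by (simp add: abs_mult)
  also have "\<dots> = (\<bar>\<beta> - (w \<bullet> g) * (w \<bullet> n)\<bar> + norm z / norm n) * N"
    using N by (simp add: power2_eq_square field_simps)
  finally show ?thesis using N by simp
qed

lemma norm_symmetric_matrix_le:
  fixes G :: "real^'n^'n" and n w :: "real^'n"
  assumes sym: "transpose G = G" and c: "0 < c" and w: "(norm w)^2 \<le> 1 - c"
  shows "c * norm G \<le> (CARD('n) + 6) * norm (G - outer_prod (G *v n) n) + \<bar>trace G - w \<bullet> (G *v w)\<bar>"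
proof -
  define g where "g = G *v n"
  define M where "M = G - outer_prod g n"
  define z where "z = (M - transpose M) *v n"
  have G: "G = M + outer_prod g n" by (simp add: M_def)
  have nw: "norm w \<le> 1" by (rule power2_le_imp_le) (use w c in auto)
  have c1: "c \<le> 1" using w zero_le_power2[of "norm w"] by linarith
  have "c * norm G \<le> 3 * norm M + (\<bar>trace G - w \<bullet> (G *v w)\<bar> + (CARD('n) + 3) * norm M)"
  proof (cases "n = 0")
    case True
    then have "G = M" by (simp add: G outer_prod_def vec_eq_iff)
    then have "c * norm G \<le> norm M" using c c1 by (simp add: mult_left_le_one_le)
    moreover have "0 \<le> (CARD('n) + 3) * norm M" by simp
    ultimately show ?thesis using abs_ge_zero[of "trace G - w \<bullet> (G *v w)"] norm_ge_zero[of M]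
      by linarith
  next
    case False
    have z: "norm z / norm n \<le> 2 * norm M"
      using norm_skew_part_mult_le[of M n] False by (simp add: z_def divide_le_eq mult_ac)
    have Ng: "(n \<bullet> n) *\<^sub>R g = (n \<bullet> g) *\<^sub>R n - z"
      using symmetric_skew_part_identity[OF sym g_def] by (simp add: z_def M_def)
    have "c * \<bar>n \<bullet> g\<bar> \<le> \<bar>n \<bullet> g - (w \<bullet> g) * (w \<bullet> n)\<bar> + norm z / norm n"
      using elliptic_normal_component_le[OF Ng c w False] .
    also have "n \<bullet> g - (w \<bullet> g) * (w \<bullet> n) = (trace G - w \<bullet> (G *v w)) - (trace M - w \<bullet> (M *v w))"
      unfolding G elliptic_contraction_add_outer_prod by (simp add: inner_commute)
    finally have \<beta>: "c * \<bar>n \<bullet> g\<bar> \<le> \<bar>trace G - w \<bullet> (G *v w)\<bar> + (CARD('n) + 3) * norm M"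
      using abs_elliptic_contraction_le[OF nw, of M] z by (simp add: algebra_simps)
    have "norm g * norm n * norm n = norm ((n \<bullet> g) *\<^sub>R n - z)"
      using arg_cong[OF Ng, of norm] by (simp add: power2_norm_eq_inner[symmetric] power2_eq_square mult_ac)
    also have "\<dots> \<le> \<bar>n \<bullet> g\<bar> * norm n + norm z"
      using norm_triangle_ineq4[of "(n \<bullet> g) *\<^sub>R n" z] by simp
    also have "\<dots> = (\<bar>n \<bullet> g\<bar> + norm z / norm n) * norm n" using False by (simp add: field_simps)
    finally have "norm g * norm n \<le> \<bar>n \<bullet> g\<bar> + norm z / norm n" using False by simp
    then have "norm G \<le> 3 * norm M + \<bar>n \<bullet> g\<bar>"
      using norm_triangle_ineq[of M "outer_prod g n"] z False by (simp add: G norm_outer_prod)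
    then have "c * norm G \<le> c * (3 * norm M) + c * \<bar>n \<bullet> g\<bar>"
      using c by (simp add: distrib_left[symmetric] mult_left_mono)
    also have "c * (3 * norm M) \<le> 3 * norm M" using c c1 by (simp add: mult_left_le_one_le)
    finally show ?thesis using \<beta> by simp
  qed
  then show ?thesis by (simp add: M_def g_def algebra_simps)
qed

section \<open>The pointwise Hessian estimate\<close>

definition hess :: "(real^3 \<Rightarrow> real) \<Rightarrow> real^3 \<Rightarrow> real^3^3" where
  "hess f x = (\<chi> p q. pd p (pd q f) x)"

definition jac :: "(real^3 \<Rightarrow> real^3) \<Rightarrow> real^3 \<Rightarrow> real^3^3" where
  "jac v x = (\<chi> p l. pd p (\<lambda>y. v y $ l) x)"

definition tan_hess :: "(real^3 \<Rightarrow> real^3) \<Rightarrow> (real^3 \<Rightarrow> real) \<Rightarrow> real^3 \<Rightarrow> real^3^3" where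
  "tan_hess nv f x = (\<chi> p i. pd p (tan_d nv i f) x)"

lemma transpose_hess:
  assumes "open U" "smooth_on U f" "x \<in> U"
  shows "transpose (hess f x) = hess f x"
  using pd_commute[OF assms] by (simp add: vec_eq_iff hess_def transpose_def)

lemma Aop_eq_trace_hess:
  assumes that: "w = (\<chi> i. Vs x $ i / V0 x)"
  shows "Aop V0 Vs f x = trace (hess f x) - w \<bullet> (hess f x *v w)"
proof -
  have "Aop V0 Vs f x
      = (\<Sum>i\<in>UNIV. \<Sum>j\<in>UNIV. (if i = j then hess f x $ i $ j else 0) - w$i * (hess f x $ i $ j * w$j))"
    unfolding Aop_def by (intro sum.cong refl) (simp add: abar_def hess_def that algebra_simps)
  also have "\<dots> = trace (hess f x) - w \<bullet> (hess f x *v w)"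
    by (simp add: sum_subtractf trace_def inner_vec_def matrix_vector_mult_def sum_distrib_left)
  finally show ?thesis .
qed

lemma pd_tan_d:
  assumes "f differentiable (at x)" "\<And>l. pd l f differentiable (at x)"
    and "\<And>l. (\<lambda>y. nv y $ l) differentiable (at x)"
  shows "pd p (tan_d nv i f) x = pd p (pd i f) x - nv x $ i * (\<Sum>l\<in>UNIV. nv x $ l * pd p (pd l f) x)
     - pd p (\<lambda>y. nv y $ i) x * (\<Sum>l\<in>UNIV. nv x $ l * pd l f x)
     - nv x $ i * (\<Sum>l\<in>UNIV. pd p (\<lambda>y. nv y $ l) x * pd l f x)"
proof -
  have sum_diff: "(\<lambda>y. \<Sum>l\<in>UNIV. nv y $ l * pd l f y) differentiable (at x)"
    using assms by (intro differentiable_sum differentiable_mult) auto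
  have "pd p (\<lambda>y. \<Sum>l\<in>UNIV. nv y $ l * pd l f y) x
      = (\<Sum>l\<in>UNIV. pd p (\<lambda>y. nv y $ l) x * pd l f x + nv x $ l * pd p (pd l f) x)"
    using assms by (simp add: pd_sum pd_mult differentiable_mult)
  moreover have "tan_d nv i f = (\<lambda>y. pd i f y - nv y $ i * (\<Sum>l\<in>UNIV. nv y $ l * pd l f y))"
    by (simp add: tan_d_def[abs_def])
  ultimately show ?thesis
    using assms sum_diff by (simp add: pd_diff pd_mult differentiable_mult sum.distrib algebra_simps)
qed

lemma tan_hess_eq:
  assumes "open U" "smooth_on U f" "x \<in> U" "\<And>l. (\<lambda>y. nv y $ l) differentiable (at x)"
  shows "tan_hess nv f x = hess f x - outer_prod (hess f x *v nv x) (nv x)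
           - ((nv x \<bullet> grad f x) *\<^sub>R jac nv x + outer_prod (jac nv x *v grad f x) (nv x))"
proof -
  have "f differentiable (at x)" "\<And>l. pd l f differentiable (at x)"
    using assms smooth_on_differentiable smooth_on_pd by blast+
  with assms(4) show ?thesis
    by (simp add: vec_eq_iff tan_hess_def hess_def jac_def grad_def outer_prod_def pd_tan_d
        matrix_vector_mult_def inner_vec_def mult_ac)
qed

lemma hess_pointwise_bound:
  assumes "open U" "smooth_on U f" "x \<in> U" "\<And>l. (\<lambda>y. nv y $ l) differentiable (at x)"
    and "0 < c" "V0 x \<noteq> 0" "(norm (Vs x))^2 \<le> (1 - c) * (V0 x)^2"
  shows "c * norm (hess f x) \<le> 9 * norm (tan_hess nv f x)
           + 18 * norm (nv x) * norm (jac nv x) * norm (grad f x) + \<bar>Aop V0 Vs f x\<bar>"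
proof -
  define w where "w = (\<chi> i. Vs x $ i / V0 x)"
  define L where "L = (nv x \<bullet> grad f x) *\<^sub>R jac nv x + outer_prod (jac nv x *v grad f x) (nv x)"
  have "(norm w)^2 = (norm (Vs x))^2 / (V0 x)^2"
    by (simp add: w_def norm_sq_vec power_divide sum_divide_distrib)
  then have w: "(norm w)^2 \<le> 1 - c" using assms(6,7) by (simp add: divide_le_eq)
  have "norm L \<le> 2 * norm (nv x) * norm (jac nv x) * norm (grad f x)"
  proof -
    have "norm L \<le> \<bar>nv x \<bullet> grad f x\<bar> * norm (jac nv x) + norm (jac nv x *v grad f x) * norm (nv x)"
      unfolding L_def
      using norm_triangle_ineq[of "(nv x \<bullet> grad f x) *\<^sub>R jac nv x" "outer_prod (jac nv x *v grad f x) (nv x)"]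
      by (simp add: norm_outer_prod)
    also have "\<dots> \<le> (norm (nv x) * norm (grad f x)) * norm (jac nv x)
        + (norm (jac nv x) * norm (grad f x)) * norm (nv x)"
      by (intro add_mono mult_right_mono Cauchy_Schwarz_ineq2 norm_matrix_vector_mult_le) auto
    finally show ?thesis by (simp add: algebra_simps)
  qed
  moreover have "norm (hess f x - outer_prod (hess f x *v nv x) (nv x)) \<le> norm (tan_hess nv f x) + norm L"
    using tan_hess_eq[OF assms(1-4)] norm_triangle_ineq[of "tan_hess nv f x" L] by (simp add: L_def)
  moreover have "c * norm (hess f x)
      \<le> 9 * norm (hess f x - outer_prod (hess f x *v nv x) (nv x)) + \<bar>Aop V0 Vs f x\<bar>"
    using norm_symmetric_matrix_le[OF transpose_hess[OF assms(1-3)] assms(5) w, of "nv x"]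
    by (simp add: Aop_eq_trace_hess[OF refl] w_def)
  ultimately show ?thesis by linarith
qed

section \<open>Square integrals and Sobolev norms\<close>

definition sq_integral :: "(real^3) set \<Rightarrow> (real^3 \<Rightarrow> real) \<Rightarrow> real" where
  "sq_integral \<Omega> f = integral \<Omega> (\<lambda>x. (f x)^2)"

lemma sq_integral_nonneg: "0 \<le> sq_integral \<Omega> f"
  unfolding sq_integral_def
  by (cases "(\<lambda>x. (f x)^2) integrable_on \<Omega>") (auto intro: integral_nonneg simp: not_integrable_integral)

lemma sq_integral_cong: "(\<And>x. x \<in> \<Omega> \<Longrightarrow> f x = g x) \<Longrightarrow> sq_integral \<Omega> f = sq_integral \<Omega> g"
  unfolding sq_integral_def by (intro integral_cong) simp

lemma integrable_on_bounded_open: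
  fixes f :: "'a::euclidean_space \<Rightarrow> real"
  assumes "open \<Omega>" "bounded \<Omega>" "continuous_on (closure \<Omega>) f"
  shows "f integrable_on \<Omega>"
proof -
  have "compact (closure \<Omega>)" using assms(2) by (simp add: compact_closure)
  then have "bounded (f ` closure \<Omega>)"
    using assms(3) compact_continuous_image compact_imp_bounded by blast
  then obtain B where B: "\<And>x. x \<in> closure \<Omega> \<Longrightarrow> norm (f x) \<le> B"
    unfolding bounded_iff by blast
  have \<Omega>: "\<Omega> \<in> lmeasurable" using assms lmeasurable_open by blast
  then have sets: "\<Omega> \<in> sets lebesgue" by (simp add: fmeasurableD)
  have meas: "f \<in> borel_measurable (lebesgue_on \<Omega>)"
    using continuous_on_subset[OF assms(3) closure_subset] sets
    by (rule continuous_imp_measurable_on_sets_lebesgue)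
  show ?thesis
    by (rule measurable_bounded_by_integrable_imp_integrable_real[OF meas integrable_on_const[OF \<Omega>, of B] _ sets])
      (use B closure_subset in force)
qed

lemma has_integral_sq_integral:
  assumes "open \<Omega>" "bounded \<Omega>" "continuous_on (closure \<Omega>) f"
  shows "((\<lambda>x. (f x)^2) has_integral sq_integral \<Omega> f) \<Omega>"
proof -
  have "continuous_on (closure \<Omega>) (\<lambda>x. (f x)^2)" using assms(3) by (rule continuous_on_power)
  then show ?thesis
    unfolding sq_integral_def by (intro integrable_integral integrable_on_bounded_open assms(1,2))
qed

lemma sq_integral_le_split:
  assumes "open \<Omega>" "bounded \<Omega>" "continuous_on (closure \<Omega>) f" "continuous_on (closure \<Omega>) g"
  shows "sq_integral \<Omega> f \<le> 2 * sq_integral \<Omega> g + 2 * sq_integral \<Omega> (\<lambda>x. f x - g x)"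
proof (rule has_integral_le)
  show "((\<lambda>x. (f x)^2) has_integral sq_integral \<Omega> f) \<Omega>"
    using assms by (intro has_integral_sq_integral)
  have "continuous_on (closure \<Omega>) (\<lambda>x. f x - g x)" using assms(3,4) by (rule continuous_on_diff)
  then show "((\<lambda>x. 2 * (g x)^2 + 2 * (f x - g x)^2) has_integral
      2 * sq_integral \<Omega> g + 2 * sq_integral \<Omega> (\<lambda>x. f x - g x)) \<Omega>"
    using assms by (intro has_integral_add has_integral_mult_right has_integral_sq_integral)
  show "(f x)^2 \<le> 2 * (g x)^2 + 2 * (f x - g x)^2" for x
    using zero_le_power2[of "f x - 2 * g x"] by (simp add: power2_eq_square algebra_simps)
qed

lemma sum_lists_length_Suc:
  "(\<Sum>L\<in>{L :: 'a::finite list. length L = Suc m}. F L) = (\<Sum>p\<in>UNIV. \<Sum>is\<in>{is. length is = m}. F (p # is))"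
proof -
  have L: "{L :: 'a list. length L = Suc m} = (\<lambda>(p, is). p # is) ` (UNIV \<times> {is. length is = m})"
    by (auto simp: image_def length_Suc_conv)
  have inj: "inj_on (\<lambda>(p :: 'a, is). p # is) (UNIV \<times> {is. length is = m})"
    by (auto simp: inj_on_def)
  show ?thesis
    unfolding L sum.reindex[OF inj] by (simp add: sum.cartesian_product case_prod_beta' o_def)
qed

lemma sob_norm_sq:
  "(sob_norm k \<Omega> f)^2 = (\<Sum>m\<le>k. \<Sum>is\<in>{is::3 list. length is = m}. sq_integral \<Omega> (dpar is f))"
  unfolding sob_norm_def sq_integral_def[symmetric]
  by (rule real_sqrt_pow2) (intro sum_nonneg sq_integral_nonneg)

lemma sob_norm_nonneg: "0 \<le> sob_norm k \<Omega> f"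
  unfolding sob_norm_def sq_integral_def[symmetric] by (intro real_sqrt_ge_zero sum_nonneg sq_integral_nonneg)

lemma sob_norm_0_sq: "(sob_norm 0 \<Omega> f)^2 = sq_integral \<Omega> f"
proof -
  have "{is :: 3 list. length is = 0} = {[]}" by auto
  then show ?thesis by (simp add: sob_norm_sq)
qed

lemma sob_norm_Suc_sq:
  "(sob_norm (Suc k) \<Omega> f)^2
     = (sob_norm k \<Omega> f)^2 + (\<Sum>is\<in>{is::3 list. length is = k}. \<Sum>p\<in>UNIV. sq_integral \<Omega> (dpar (p # is) f))"
proof -
  have "(sob_norm (Suc k) \<Omega> f)^2
     = (sob_norm k \<Omega> f)^2 + (\<Sum>p\<in>UNIV. \<Sum>is\<in>{is::3 list. length is = k}. sq_integral \<Omega> (dpar (p # is) f))"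
    by (simp add: sob_norm_sq sum_lists_length_Suc)
  then show ?thesis
    using sum.swap[of "\<lambda>p is. sq_integral \<Omega> (dpar (p # is) f)" "{is. length is = k}" UNIV] by simp
qed

lemma sob_norm_Suc_Suc_sq:
  "(sob_norm (Suc (Suc k)) \<Omega> f)^2 = (sob_norm (Suc k) \<Omega> f)^2
     + (\<Sum>is\<in>{is::3 list. length is = k}. \<Sum>q\<in>UNIV. \<Sum>p\<in>UNIV. sq_integral \<Omega> (dpar (p # q # is) f))"
  unfolding sob_norm_Suc_sq[of "Suc k"] sum_lists_length_Suc
  using sum.swap[of "\<lambda>q is. \<Sum>p\<in>UNIV. sq_integral \<Omega> (dpar (p # q # is) f)" "{is. length is = k}" UNIV]
  by simp

lemma sum_top_order_le_sob_norm_sq: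
  "(\<Sum>is\<in>{is::3 list. length is = k}. \<Sum>p\<in>UNIV. sq_integral \<Omega> (dpar (p # is) f)) \<le> (sob_norm (Suc k) \<Omega> f)^2"
  unfolding sob_norm_Suc_sq by simp

lemma sum_pd_le_sob_norm_1_sq: "(\<Sum>p\<in>UNIV. sq_integral \<Omega> (pd p f)) \<le> (sob_norm 1 \<Omega> f)^2"
proof -
  have "{is :: 3 list. length is = 0} = {[]}" by auto
  then show ?thesis using sum_top_order_le_sob_norm_sq[where k = 0] by simp
qed

lemma fam_norm_sq: "(fam_norm k \<Omega> F A)^2 = (\<Sum>a\<in>A. (sob_norm k \<Omega> (F a))^2)"
  unfolding fam_norm_def by (rule real_sqrt_pow2) (intro sum_nonneg zero_le_power2)

lemma fam_norm_nonneg: "0 \<le> fam_norm k \<Omega> F A"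
  unfolding fam_norm_def by (intro real_sqrt_ge_zero sum_nonneg zero_le_power2)

lemma fam_norm_0_sq: "(fam_norm 0 \<Omega> F A)^2 = (\<Sum>a\<in>A. sq_integral \<Omega> (F a))"
  by (simp add: fam_norm_sq sob_norm_0_sq)

lemma sum_tangential_le_fam_norm_sq:
  "(\<Sum>is\<in>{is::3 list. length is = k}. \<Sum>i\<in>UNIV. \<Sum>p\<in>UNIV. sq_integral \<Omega> (dpar (p # is) (T i)))
     \<le> (fam_norm (Suc k) \<Omega> T UNIV)^2"
proof -
  have "(\<Sum>is\<in>{is::3 list. length is = k}. \<Sum>i\<in>UNIV. \<Sum>p\<in>UNIV. sq_integral \<Omega> (dpar (p # is) (T i)))
      = (\<Sum>i\<in>UNIV. \<Sum>is\<in>{is::3 list. length is = k}. \<Sum>p\<in>UNIV. sq_integral \<Omega> (dpar (p # is) (T i)))"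
    by (rule sum.swap)
  also have "\<dots> \<le> (\<Sum>i\<in>UNIV. (sob_norm (Suc k) \<Omega> (T i))^2)"
    by (intro sum_mono sum_top_order_le_sob_norm_sq)
  finally show ?thesis by (simp add: fam_norm_sq)
qed

lemma sum_pd_le_fam_norm_1_sq:
  "(\<Sum>is\<in>L. \<Sum>i\<in>UNIV. \<Sum>p\<in>UNIV. sq_integral \<Omega> (pd p (F i is)))
     \<le> (fam_norm 1 \<Omega> (\<lambda>(i, is). F i is) (UNIV \<times> L))^2"
proof -
  have "(\<Sum>is\<in>L. \<Sum>i\<in>UNIV. \<Sum>p\<in>UNIV. sq_integral \<Omega> (pd p (F i is)))
      \<le> (\<Sum>is\<in>L. \<Sum>i\<in>UNIV. (sob_norm 1 \<Omega> (F i is))^2)"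
    by (intro sum_mono sum_pd_le_sob_norm_1_sq)
  also have "\<dots> = (\<Sum>i\<in>UNIV. \<Sum>is\<in>L. (sob_norm 1 \<Omega> (F i is))^2)" by (rule sum.swap)
  finally show ?thesis by (simp add: fam_norm_sq sum.cartesian_product case_prod_beta')
qed

section \<open>The estimate on a slice\<close>

lemma sq_sum3_le: "((a::real) + b + c)^2 \<le> 3 * (a^2 + b^2 + c^2)"
proof -
  have "0 \<le> (a - b)^2 + (b - c)^2 + (a - c)^2" by simp
  then show ?thesis by (simp add: power2_eq_square algebra_simps)
qed

lemma le_sqrt_mult_sum_if_sq_le:
  fixes a s f1 f2 f3 f4 K :: real
  assumes "a^2 \<le> s^2 + K * (s^2 + f1^2 + f2^2 + f3^2 + f4^2)" and "0 \<le> a" "0 \<le> K"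
    and "0 \<le> s" "0 \<le> f1" "0 \<le> f2" "0 \<le> f3" "0 \<le> f4"
  shows "a \<le> sqrt (1 + K) * (s + f1 + f2 + f3 + f4)"
proof -
  have "0 \<le> f1^2 + f2^2 + f3^2 + f4^2" by simp
  then have "a^2 \<le> (1 + K) * (s^2 + f1^2 + f2^2 + f3^2 + f4^2)"
    using assms(1) by (simp only: distrib_right mult_1_left)
  also have "\<dots> \<le> (1 + K) * (s + f1 + f2 + f3 + f4)^2"
    using assms(3-8) by (intro mult_left_mono) (simp_all add: power2_eq_square algebra_simps)
  finally have "a \<le> sqrt ((1 + K) * (s + f1 + f2 + f3 + f4)^2)"
    using assms(2) real_le_rsqrt by blast
  also have "\<dots> = sqrt (1 + K) * (s + f1 + f2 + f3 + f4)"
    using assms(4-8) by (simp add: real_sqrt_mult)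
  finally show ?thesis .
qed

locale elliptic_slice =
  fixes \<Omega> U :: "(real^3) set" and V0 :: "real^3 \<Rightarrow> real" and Vs nv :: "real^3 \<Rightarrow> real^3"
  assumes open_\<Omega>: "open \<Omega>" and bounded_\<Omega>: "bounded \<Omega>"
    and open_U: "open U" and closure_subset_U: "closure \<Omega> \<subseteq> U"
    and smooth_V0: "smooth_on U V0" and V0_nonzero: "\<forall>x\<in>U. V0 x \<noteq> 0"
    and smooth_Vs: "\<And>i. smooth_on U (\<lambda>x. Vs x $ i)"
    and smooth_nv: "\<And>i. smooth_on U (\<lambda>x. nv x $ i)"
    and timelike: "\<And>x. x \<in> closure \<Omega> \<Longrightarrow> (norm (Vs x))^2 < (V0 x)^2"
begin

lemma continuous_on_closure: "smooth_on U f \<Longrightarrow> continuous_on (closure \<Omega>) f"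
  using smooth_on_continuous_on continuous_on_subset closure_subset_U by blast

lemma smooth_Aop: "smooth_on U f \<Longrightarrow> smooth_on U (Aop V0 Vs f)"
  using smooth_on_Aop[OF open_U smooth_V0 V0_nonzero smooth_Vs] .

lemma smooth_tan_d: "smooth_on U f \<Longrightarrow> smooth_on U (tan_d nv i f)"
  using smooth_on_tan_d[OF open_U smooth_nv] .

lemma uniformly_timelike:
  obtains c where "0 < c" "\<And>x. x \<in> closure \<Omega> \<Longrightarrow> (norm (Vs x))^2 \<le> (1 - c) * (V0 x)^2"
proof (cases "closure \<Omega> = {}")
  case True
  then show ?thesis using that[of 1] by simp
next
  case False
  let ?q = "\<lambda>x. (norm (Vs x))^2 / (V0 x)^2"
  have "continuous_on U ?q"
    using continuous_on_smooth_components[OF smooth_Vs] smooth_on_continuous_on[OF smooth_V0] V0_nonzero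
    by (intro continuous_intros) auto
  then obtain x0 where x0: "x0 \<in> closure \<Omega>" "\<And>x. x \<in> closure \<Omega> \<Longrightarrow> ?q x \<le> ?q x0"
    using continuous_attains_sup[OF compact_closure[THEN iffD2, OF bounded_\<Omega>] False]
      continuous_on_subset[OF _ closure_subset_U] by meson
  show ?thesis
  proof (rule that[of "1 - ?q x0"])
    show "0 < 1 - ?q x0" using timelike[OF x0(1)] by (simp add: divide_less_eq)
    fix x assume x: "x \<in> closure \<Omega>"
    have "V0 x \<noteq> 0" using V0_nonzero closure_subset_U x by blast
    then show "(norm (Vs x))^2 \<le> (1 - (1 - ?q x0)) * (V0 x)^2"
      using x0(2)[OF x] by (simp add: divide_le_eq)
  qed
qed

lemma bounded_normal_field:
  obtains B where "\<And>x. x \<in> closure \<Omega> \<Longrightarrow> norm (nv x) * norm (jac nv x) \<le> B"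
proof -
  have "continuous_on U (jac nv)"
    unfolding jac_def
    by (intro continuous_on_vec_lambda smooth_on_continuous_on smooth_on_pd smooth_nv)
  then have "continuous_on (closure \<Omega>) (\<lambda>x. norm (nv x) * norm (jac nv x))"
    using continuous_on_smooth_components[OF smooth_nv]
    by (intro continuous_intros continuous_on_subset[OF _ closure_subset_U])
  then have "bounded ((\<lambda>x. norm (nv x) * norm (jac nv x)) ` closure \<Omega>)"
    by (intro compact_imp_bounded compact_continuous_image) (simp_all add: compact_closure bounded_\<Omega>)
  then show ?thesis using that unfolding bounded_iff by fastforce
qed

lemma hess_pointwise_sq_bound:
  obtains K where "0 \<le> K" "\<And>f x. smooth_on U f \<Longrightarrow> x \<in> \<Omega> \<Longrightarrow>
    (norm (hess f x))^2 \<le> K * ((norm (tan_hess nv f x))^2 + (norm (grad f x))^2 + (Aop V0 Vs f x)^2)"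
proof -
  obtain c where c: "0 < c" "\<And>x. x \<in> closure \<Omega> \<Longrightarrow> (norm (Vs x))^2 \<le> (1 - c) * (V0 x)^2"
    using uniformly_timelike by blast
  obtain B where B: "\<And>x. x \<in> closure \<Omega> \<Longrightarrow> norm (nv x) * norm (jac nv x) \<le> B"
    using bounded_normal_field by blast
  show ?thesis
  proof (rule that[of "3 * (81 + 324 * B^2) / c^2"])
    fix f x assume f: "smooth_on U f" and x: "x \<in> \<Omega>"
    have xc: "x \<in> closure \<Omega>" using x closure_subset by blast
    then have xU: "x \<in> U" using closure_subset_U by blast
    have "c * norm (hess f x) \<le> 9 * norm (tan_hess nv f x)
        + 18 * (norm (nv x) * norm (jac nv x)) * norm (grad f x) + \<bar>Aop V0 Vs f x\<bar>"
      using hess_pointwise_bound[of U f x nv c V0 Vs, OF open_U f xU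
          smooth_on_differentiable[OF smooth_nv xU] c(1) bspec[OF V0_nonzero xU] c(2)[OF xc]]
      by (simp add: mult.assoc)
    also have "\<dots> \<le> 9 * norm (tan_hess nv f x) + 18 * B * norm (grad f x) + \<bar>Aop V0 Vs f x\<bar>"
      using B[OF xc] by (simp add: mult_right_mono)
    finally have "(c * norm (hess f x))^2
        \<le> (9 * norm (tan_hess nv f x) + 18 * B * norm (grad f x) + \<bar>Aop V0 Vs f x\<bar>)^2"
      using c(1) by (intro power_mono) auto
    also have "\<dots> \<le> 3 * ((9 * norm (tan_hess nv f x))^2 + (18 * B * norm (grad f x))^2 + (Aop V0 Vs f x)^2)"
      using sq_sum3_le[of "9 * norm (tan_hess nv f x)" "18 * B * norm (grad f x)" "\<bar>Aop V0 Vs f x\<bar>"]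
      by simp
    also have "\<dots> \<le> 3 * (81 + 324 * B^2)
        * ((norm (tan_hess nv f x))^2 + (norm (grad f x))^2 + (Aop V0 Vs f x)^2)"
      by (simp add: power_mult_distrib algebra_simps)
    finally show "(norm (hess f x))^2 \<le> 3 * (81 + 324 * B^2) / c^2
        * ((norm (tan_hess nv f x))^2 + (norm (grad f x))^2 + (Aop V0 Vs f x)^2)"
      using c(1) by (simp add: power_mult_distrib field_simps)
  qed simp
qed

definition hess_L2_bound :: "real \<Rightarrow> bool" where
  "hess_L2_bound K \<longleftrightarrow> 0 \<le> K \<and> (\<forall>f. smooth_on U f \<longrightarrow>
     (\<Sum>p\<in>UNIV. \<Sum>q\<in>UNIV. sq_integral \<Omega> (pd p (pd q f)))
       \<le> K * ((\<Sum>i\<in>UNIV. \<Sum>p\<in>UNIV. sq_integral \<Omega> (pd p (tan_d nv i f)))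
              + (\<Sum>p\<in>UNIV. sq_integral \<Omega> (pd p f)) + sq_integral \<Omega> (Aop V0 Vs f)))"

lemma hess_L2_estimate: "\<exists>K. hess_L2_bound K"
proof -
  obtain K where K: "0 \<le> K" "\<And>f x. smooth_on U f \<Longrightarrow> x \<in> \<Omega> \<Longrightarrow>
    (norm (hess f x))^2 \<le> K * ((norm (tan_hess nv f x))^2 + (norm (grad f x))^2 + (Aop V0 Vs f x)^2)"
    using hess_pointwise_sq_bound by blast
  have pointwise: "(\<Sum>p\<in>UNIV. \<Sum>q\<in>UNIV. (pd p (pd q f) x)^2)
      \<le> K * ((\<Sum>i\<in>UNIV. \<Sum>p\<in>UNIV. (pd p (tan_d nv i f) x)^2) + (\<Sum>p\<in>UNIV. (pd p f x)^2)
             + (Aop V0 Vs f x)^2)"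
    if "smooth_on U f" "x \<in> \<Omega>" for f x
    unfolding sum.swap[of "\<lambda>i p. (pd p (tan_d nv i f) x)^2" UNIV UNIV]
    using K(2)[OF that] by (simp add: norm_sq_matrix norm_sq_vec hess_def tan_hess_def grad_def)
  have "(\<Sum>p\<in>UNIV. \<Sum>q\<in>UNIV. sq_integral \<Omega> (pd p (pd q f)))
       \<le> K * ((\<Sum>i\<in>UNIV. \<Sum>p\<in>UNIV. sq_integral \<Omega> (pd p (tan_d nv i f)))
              + (\<Sum>p\<in>UNIV. sq_integral \<Omega> (pd p f)) + sq_integral \<Omega> (Aop V0 Vs f))"
    if f: "smooth_on U f" for f
  proof (rule has_integral_le)
    note sq = has_integral_sq_integral[OF open_\<Omega> bounded_\<Omega> continuous_on_closure]
    show "((\<lambda>x. \<Sum>p\<in>UNIV. \<Sum>q\<in>UNIV. (pd p (pd q f) x)^2) has_integral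
        (\<Sum>p\<in>UNIV. \<Sum>q\<in>UNIV. sq_integral \<Omega> (pd p (pd q f)))) \<Omega>"
      by (intro has_integral_sum sq smooth_on_pd f finite)
    show "((\<lambda>x. K * ((\<Sum>i\<in>UNIV. \<Sum>p\<in>UNIV. (pd p (tan_d nv i f) x)^2) + (\<Sum>p\<in>UNIV. (pd p f x)^2)
           + (Aop V0 Vs f x)^2)) has_integral
        K * ((\<Sum>i\<in>UNIV. \<Sum>p\<in>UNIV. sq_integral \<Omega> (pd p (tan_d nv i f)))
            + (\<Sum>p\<in>UNIV. sq_integral \<Omega> (pd p f)) + sq_integral \<Omega> (Aop V0 Vs f))) \<Omega>"
      by (intro has_integral_mult_right has_integral_add has_integral_sum sq smooth_on_pd
          smooth_tan_d smooth_Aop f finite)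
  qed (rule pointwise[OF f])
  then show ?thesis using K(1) unfolding hess_L2_bound_def by blast
qed

lemma \<Omega>_subset_U: "\<Omega> \<subseteq> U"
  using closure_subset closure_subset_U by blast

lemma multi_index_estimate:
  assumes "hess_L2_bound K" and \<Theta>: "smooth_on U \<Theta>"
  shows "(\<Sum>q\<in>UNIV. \<Sum>p\<in>UNIV. sq_integral \<Omega> (dpar (p # q # is) \<Theta>))
    \<le> 2 * K * ((\<Sum>i\<in>UNIV. \<Sum>p\<in>UNIV. sq_integral \<Omega> (dpar (p # is) (tan_d nv i \<Theta>)))
       + (\<Sum>i\<in>UNIV. \<Sum>p\<in>UNIV. sq_integral \<Omega> (pd p (\<lambda>x. tan_d nv i (dpar is \<Theta>) x - dpar is (tan_d nv i \<Theta>) x)))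
       + (\<Sum>p\<in>UNIV. sq_integral \<Omega> (dpar (p # is) \<Theta>))
       + sq_integral \<Omega> (dpar is (Aop V0 Vs \<Theta>))
       + sq_integral \<Omega> (\<lambda>x. Aop V0 Vs (dpar is \<Theta>) x - dpar is (Aop V0 Vs \<Theta>) x))"
    (is "?lhs \<le> 2 * K * (?a + ?b + ?c + ?x + ?y)")
proof -
  note K = assms(1)[unfolded hess_L2_bound_def]
  define D where "D = dpar is \<Theta>"
  have D: "smooth_on U D" unfolding D_def using \<Theta> by (rule smooth_on_dpar)
  note split = sq_integral_le_split[OF open_\<Omega> bounded_\<Omega> continuous_on_closure continuous_on_closure]
  have tan: "sq_integral \<Omega> (pd p (tan_d nv i D))
      \<le> 2 * sq_integral \<Omega> (dpar (p # is) (tan_d nv i \<Theta>))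
        + 2 * sq_integral \<Omega> (pd p (\<lambda>x. tan_d nv i D x - dpar is (tan_d nv i \<Theta>) x))" for p i
  proof -
    have T: "smooth_on U (dpar is (tan_d nv i \<Theta>))" by (intro smooth_on_dpar smooth_tan_d \<Theta>)
    have "sq_integral \<Omega> (\<lambda>x. pd p (tan_d nv i D) x - pd p (dpar is (tan_d nv i \<Theta>)) x)
        = sq_integral \<Omega> (pd p (\<lambda>x. tan_d nv i D x - dpar is (tan_d nv i \<Theta>) x))"
      using \<Omega>_subset_U T D
      by (intro sq_integral_cong pd_diff[symmetric] smooth_on_differentiable[OF smooth_tan_d]
          smooth_on_differentiable[OF T]) auto
    then show ?thesis
      using split[OF smooth_on_pd[OF smooth_tan_d[OF D, of i], of p] smooth_on_pd[OF T, of p]] by simp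
  qed
  have "?lhs \<le> K * ((\<Sum>i\<in>UNIV. \<Sum>p\<in>UNIV. sq_integral \<Omega> (pd p (tan_d nv i D))) + ?c
      + sq_integral \<Omega> (Aop V0 Vs D))"
    using K[THEN conjunct2, rule_format, OF D] sum.swap[of "\<lambda>q p. sq_integral \<Omega> (pd p (pd q D))" UNIV UNIV] by (simp add: D_def)
  also have "\<dots> \<le> K * (2 * ?a + 2 * ?b + ?c + 2 * ?x + 2 * ?y)"
  proof -
    have "(\<Sum>i\<in>UNIV. \<Sum>p\<in>UNIV. sq_integral \<Omega> (pd p (tan_d nv i D))) \<le> 2 * ?a + 2 * ?b"
      using sum_mono[OF sum_mono[OF tan]] by (simp add: D_def sum.distrib sum_distrib_left)
    moreover have "sq_integral \<Omega> (Aop V0 Vs D) \<le> 2 * ?x + 2 * ?y"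
      unfolding D_def by (intro split smooth_Aop smooth_on_dpar \<Theta>)
    ultimately show ?thesis using K by (intro mult_left_mono) auto
  qed
  also have "\<dots> \<le> 2 * K * (?a + ?b + ?c + ?x + ?y)"
    using K mult_left_mono[OF sum_nonneg[OF sq_integral_nonneg], of K]
    by (simp add: algebra_simps sum_nonneg sq_integral_nonneg)
  finally show ?thesis .
qed

lemma sob_norm_sq_estimate:
  assumes K: "hess_L2_bound K" and \<Theta>: "smooth_on U \<Theta>"
  shows "(sob_norm (Suc (Suc k)) \<Omega> \<Theta>)^2 \<le> (sob_norm (Suc k) \<Omega> \<Theta>)^2 + 2 * K * (
        (sob_norm (Suc k) \<Omega> \<Theta>)^2
      + (fam_norm 0 \<Omega> (\<lambda>is. dpar is (Aop V0 Vs \<Theta>)) {is. length is = k})^2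
      + (fam_norm 0 \<Omega> (\<lambda>is x. Aop V0 Vs (dpar is \<Theta>) x - dpar is (Aop V0 Vs \<Theta>) x) {is. length is = k})^2
      + (fam_norm 1 \<Omega> (\<lambda>(i, is) x. tan_d nv i (dpar is \<Theta>) x - dpar is (tan_d nv i \<Theta>) x)
          (UNIV \<times> {is. length is = k}))^2
      + (fam_norm (Suc k) \<Omega> (\<lambda>i. tan_d nv i \<Theta>) UNIV)^2)"
    (is "_ \<le> ?S^2 + 2 * K * (?S^2 + ?F1^2 + ?F2^2 + ?F3^2 + ?F4^2)")
proof -
  let ?L = "{is :: 3 list. length is = k}"
  have K0: "0 \<le> K" using K by (simp add: hess_L2_bound_def)
  have "(\<Sum>is\<in>?L. \<Sum>q\<in>UNIV. \<Sum>p\<in>UNIV. sq_integral \<Omega> (dpar (p # q # is) \<Theta>))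
    \<le> (\<Sum>is\<in>?L. 2 * K * ((\<Sum>i\<in>UNIV. \<Sum>p\<in>UNIV. sq_integral \<Omega> (dpar (p # is) (tan_d nv i \<Theta>)))
      + (\<Sum>i\<in>UNIV. \<Sum>p\<in>UNIV.
           sq_integral \<Omega> (pd p (\<lambda>x. tan_d nv i (dpar is \<Theta>) x - dpar is (tan_d nv i \<Theta>) x)))
      + (\<Sum>p\<in>UNIV. sq_integral \<Omega> (dpar (p # is) \<Theta>))
      + sq_integral \<Omega> (dpar is (Aop V0 Vs \<Theta>))
      + sq_integral \<Omega> (\<lambda>x. Aop V0 Vs (dpar is \<Theta>) x - dpar is (Aop V0 Vs \<Theta>) x)))"
    by (intro sum_mono multi_index_estimate[OF K \<Theta>])
  also have "\<dots> = 2 * K * ((\<Sum>is\<in>?L. \<Sum>i\<in>UNIV. \<Sum>p\<in>UNIV. sq_integral \<Omega> (dpar (p # is) (tan_d nv i \<Theta>)))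
      + (\<Sum>is\<in>?L. \<Sum>i\<in>UNIV. \<Sum>p\<in>UNIV.
           sq_integral \<Omega> (pd p (\<lambda>x. tan_d nv i (dpar is \<Theta>) x - dpar is (tan_d nv i \<Theta>) x)))
      + (\<Sum>is\<in>?L. \<Sum>p\<in>UNIV. sq_integral \<Omega> (dpar (p # is) \<Theta>))
      + (\<Sum>is\<in>?L. sq_integral \<Omega> (dpar is (Aop V0 Vs \<Theta>)))
      + (\<Sum>is\<in>?L. sq_integral \<Omega> (\<lambda>x. Aop V0 Vs (dpar is \<Theta>) x - dpar is (Aop V0 Vs \<Theta>) x)))"
    by (simp only: sum_distrib_left[symmetric] sum.distrib)
  also have "\<dots> \<le> 2 * K * (?F4^2 + ?F3^2 + ?S^2 + ?F1^2 + ?F2^2)"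
  proof -
    have "(\<Sum>is\<in>?L. \<Sum>i\<in>UNIV. \<Sum>p\<in>UNIV.
           sq_integral \<Omega> (pd p (\<lambda>x. tan_d nv i (dpar is \<Theta>) x - dpar is (tan_d nv i \<Theta>) x))) \<le> ?F3^2"
      using sum_pd_le_fam_norm_1_sq[where L = ?L and \<Omega> = \<Omega>
          and F = "\<lambda>i is x. tan_d nv i (dpar is \<Theta>) x - dpar is (tan_d nv i \<Theta>) x"]
      by (simp add: case_prod_beta')
    moreover have "(\<Sum>is\<in>?L. \<Sum>i\<in>UNIV. \<Sum>p\<in>UNIV. sq_integral \<Omega> (dpar (p # is) (tan_d nv i \<Theta>))) \<le> ?F4^2"
      by (rule sum_tangential_le_fam_norm_sq)
    moreover have "(\<Sum>is\<in>?L. \<Sum>p\<in>UNIV. sq_integral \<Omega> (dpar (p # is) \<Theta>)) \<le> ?S^2"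
      by (rule sum_top_order_le_sob_norm_sq)
    ultimately show ?thesis using K0 by (intro mult_left_mono add_mono) (auto simp: fam_norm_0_sq)
  qed
  finally show ?thesis unfolding sob_norm_Suc_Suc_sq by (simp add: algebra_simps)
qed

lemma sob_norm_estimate:
  assumes "2 \<le> j"
  shows "\<exists>C. \<forall>\<Theta>. smooth_on U \<Theta> \<longrightarrow> sob_norm j \<Omega> \<Theta> \<le> C * (
        sob_norm (j - 1) \<Omega> \<Theta>
      + fam_norm 0 \<Omega> (\<lambda>is. dpar is (Aop V0 Vs \<Theta>)) {is. length is = j - 2}
      + fam_norm 0 \<Omega> (\<lambda>is x. Aop V0 Vs (dpar is \<Theta>) x - dpar is (Aop V0 Vs \<Theta>) x) {is. length is = j - 2}
      + fam_norm 1 \<Omega> (\<lambda>(i, is) x. tan_d nv i (dpar is \<Theta>) x - dpar is (tan_d nv i \<Theta>) x)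
          (UNIV \<times> {is. length is = j - 2})
      + fam_norm (j - 1) \<Omega> (\<lambda>i. tan_d nv i \<Theta>) UNIV)"
proof -
  define k where "k = j - 2"
  have j: "j = Suc (Suc k)" "j - 1 = Suc k" "j - 2 = k" using assms by (simp_all add: k_def)
  obtain K where K: "hess_L2_bound K" using hess_L2_estimate by blast
  show ?thesis
    unfolding j(2,3) unfolding j(1)
    by (intro exI[of _ "sqrt (1 + 2 * K)"] allI impI le_sqrt_mult_sum_if_sq_le[OF sob_norm_sq_estimate[OF K]])
      (use K in \<open>simp_all add: hess_L2_bound_def sob_norm_nonneg fam_norm_nonneg\<close>)
qed

end

theorem lemma2p13:
  fixes \<Omega> :: "(real^3) set"
    and sig2 V0 :: "real^3 \<Rightarrow> real"
    and Vs nv :: "real^3 \<Rightarrow> real^3"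
    and c0 :: real
  assumes "open \<Omega>" and "bounded \<Omega>"
    and "smooth_fun sig2" and "smooth_fun V0"
    and "\<forall>i. smooth_fun (\<lambda>x. Vs x $ i)"
    and "\<forall>i. smooth_fun (\<lambda>x. nv x $ i)"
    and "\<forall>x\<in>closure \<Omega>. 0 < V0 x \<and> (norm (Vs x))\<^sup>2 - (V0 x)\<^sup>2 < 0"
    and "\<forall>x\<in>frontier \<Omega>. sig2 x = c0"
    and "\<forall>x\<in>\<Omega>. sig2 x \<noteq> c0"
    and "\<forall>x\<in>frontier \<Omega>. grad sig2 x \<noteq> 0"
    and "\<forall>x\<in>frontier \<Omega>. nv x = nunder sig2 x"
  shows "\<forall>j::nat. j \<ge> 2 \<longrightarrow> (\<exists>C::real. \<forall>\<Theta>. smooth_fun \<Theta> \<longrightarrow>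
           sob_norm j \<Omega> \<Theta> \<le> C * (
               sob_norm (j - 1) \<Omega> \<Theta>
             + fam_norm 0 \<Omega> (\<lambda>is. dpar is (Aop V0 Vs \<Theta>)) {is. length is = j - 2}
             + fam_norm 0 \<Omega> (\<lambda>is x. Aop V0 Vs (dpar is \<Theta>) x - dpar is (Aop V0 Vs \<Theta>) x)
                 {is. length is = j - 2}
             + fam_norm 1 \<Omega> (\<lambda>(i, is) x. tan_d nv i (dpar is \<Theta>) x - dpar is (tan_d nv i \<Theta>) x)
                 (UNIV \<times> {is. length is = j - 2})
             + fam_norm (j - 1) \<Omega> (\<lambda>i. tan_d nv i \<Theta>) UNIV))"
proof -
  have "continuous_on UNIV V0"
    using assms(4) by (intro smooth_on_continuous_on smooth_fun_imp_smooth_on)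
  then have "open {x. 0 < V0 x}" by (rule open_Collect_less[OF continuous_on_const])
  then interpret elliptic_slice \<Omega> "{x. 0 < V0 x}" V0 Vs nv
    using assms(1,2,4-7) by unfold_locales (auto intro: smooth_fun_imp_smooth_on)
  show ?thesis using sob_norm_estimate smooth_fun_imp_smooth_on by blast
qed

end
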